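(* Let $n, m \in \mathbb{N}$ with $n \ge 1$, let $N_1,\dots,N_n \in \mathbb{N}$, let $k_{i,j} \in \mathbb{R}$ and $q_{i,j} \in \mathbb{R}$ for $i \in [n]$, $j \in [N_i]$, let $f_1,\dots,f_m \in \mathbb{R}[x_1,\dots,x_n]$ and $p_1,\dots,p_m \in \mathbb{R}$, let $M \in \mathbb{R}_+$, and let $\varphi:\mathbb{R}^n_+ \to \mathbb{R}_+$ be a continuous piecewise polynomial payoff function. Let $d$ be the smallest even integer with $d \ge \max_{i\in[n],j\in[N_i],\ell\in[m]}\{\deg(\varphi),\deg(f_{i,j}),\deg(f_\ell)\}+1$, where $f_{i,j}(\mathbf{x}) = \max(0,x_i-k_{i,j})$. Consider the optimization problem \[ \sup_{\mu} \text{ (respectively } \inf_{\mu}\text{)} \int_{\mathbb{R}^n_+}\varphi(\mathbf{x})\,\mathrm{d}\mu(\mathbf{x}) \] over positive finite Borel measures $\mu$ on $\mathbb{R}^n_+$ subject to \[ \int_{\mathbb{R}^n_+}\max(0,x_i-k_{i,j})\,\mathrm{d}\mu(\mathbf{x}) = q_{i,j}\ (i\in[n],\,j\in[N_i]),\quad \int_{\mathbb{R}^n_+} f_\ell\,\mathrm{d}\mu = p_\ell\ (\ell\in[m]), \] \[ \int_{\mathbb{R}^n_+}\mathrm{d}\mu = 1,\qquad \int_{\mathbb{R}^n_+}\|\mathbf{x}\|_2^d\,\mathrm{d}\mu(\mathbf{x}) \le M. \] If this problem is feasible, then its supremum (respectively infimum) is attained by some feasible measure $\mu$.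
   Context: $\mathbb{R}_+=[0,\infty)$, $[N]=\{1,\dots,N\}$, $\|\cdot\|_2$ is the Euclidean norm. For a piecewise polynomial function, $\deg$ denotes the largest degree of its polynomial pieces; $\deg(f_{i,j})=1$. *)

theory Defs
  imports "HOL-Analysis.Analysis"
begin

text \<open>Real polynomials in the variables x_i (i ranging over the finite index type 'n),
  represented by their coefficient function on exponent vectors (finite support).\<close>

definition poly_coeffs :: "(('n::finite \<Rightarrow> nat) \<Rightarrow> real) \<Rightarrow> bool" where
  "poly_coeffs c \<longleftrightarrow> finite {\<alpha>. c \<alpha> \<noteq> 0}"

definition peval :: "(('n::finite \<Rightarrow> nat) \<Rightarrow> real) \<Rightarrow> real^'n \<Rightarrow> real" where
  "peval c x = (\<Sum>\<alpha>\<in>{\<alpha>. c \<alpha> \<noteq> 0}. c \<alpha> * (\<Prod>i\<in>UNIV. (x $ i) ^ \<alpha> i))"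

text \<open>Total degree (degree of the zero polynomial taken to be 0).\<close>
definition pdeg :: "(('n::finite \<Rightarrow> nat) \<Rightarrow> real) \<Rightarrow> nat" where
  "pdeg c = Max (insert 0 {(\<Sum>i\<in>UNIV. \<alpha> i) | \<alpha>. c \<alpha> \<noteq> 0})"

definition nonneg_orthant :: "(real^'n) set" where
  "nonneg_orthant = {x. \<forall>i. 0 \<le> x $ i}"

definition cont_piecewise_poly_on ::
    "(real^'n) set \<Rightarrow> (real^'n \<Rightarrow> real) \<Rightarrow> (nat \<Rightarrow> (('n::finite \<Rightarrow> nat) \<Rightarrow> real)) \<Rightarrow> nat \<Rightarrow> bool" where
  "cont_piecewise_poly_on S phi P r \<longleftrightarrow>
     continuous_on S phi \<and> (\<forall>k<r. poly_coeffs (P k)) \<and> (\<forall>x\<in>S. \<exists>k<r. phi x = peval (P k) x)"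

definition pw_deg :: "(nat \<Rightarrow> (('n::finite \<Rightarrow> nat) \<Rightarrow> real)) \<Rightarrow> nat \<Rightarrow> nat" where
  "pw_deg P r = Max (insert 0 {pdeg (P k) | k. k < r})"

text \<open>Feasible set: positive finite Borel measures on the nonnegative orthant (represented as
  Borel measures on R^n vanishing outside the orthant) satisfying the constraints.\<close>
definition feasible_measures ::
    "('n::finite \<Rightarrow> nat) \<Rightarrow> ('n \<Rightarrow> nat \<Rightarrow> real) \<Rightarrow> ('n \<Rightarrow> nat \<Rightarrow> real)
     \<Rightarrow> nat \<Rightarrow> (nat \<Rightarrow> (('n \<Rightarrow> nat) \<Rightarrow> real)) \<Rightarrow> (nat \<Rightarrow> real) \<Rightarrow> real \<Rightarrow> nat
     \<Rightarrow> (real^'n) measure set" where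
  "feasible_measures N k q m f p M d =
     {\<mu>. sets \<mu> = sets borel \<and> finite_measure \<mu>
        \<and> emeasure \<mu> (UNIV - nonneg_orthant) = 0
        \<and> (\<forall>i. \<forall>j\<in>{1..N i}. integrable \<mu> (\<lambda>x. max 0 (x $ i - k i j))
                \<and> (\<integral>x. max 0 (x $ i - k i j) \<partial>\<mu>) = q i j)
        \<and> (\<forall>l\<in>{1..m}. integrable \<mu> (peval (f l)) \<and> (\<integral>x. peval (f l) x \<partial>\<mu>) = p l)
        \<and> measure \<mu> UNIV = 1
        \<and> (\<integral>\<^sup>+x. ennreal (norm x ^ d) \<partial>\<mu>) \<le> ennreal M}"

end

theory Submission
  imports Defs "HOL-Probability.Probability"
begin

text \<open>The moment bound makes the feasible measures tight, and since \<open>d\<close> exceeds the degree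
  of every integrand it also makes all integrands uniformly integrable. Hence along a weakly
  convergent subsequence of feasible measures the constraints and the objective pass to the limit:
  the set of objective values is compact, so its supremum and infimum are attained.

  Weak compactness is obtained from Helly's selection theorem on the real line. Every coordinate
  of the orthant is compressed into \<open>[0,1)\<close> by \<open>t / (1 + t)\<close>, and the binary digits of the
  compressed coordinates are interleaved into the ternary digits (\<open>0\<close> or \<open>2\<close>) of a single
  point of the Cantor set. Decoding is continuous except where a compressed coordinate reaches
  \<open>1\<close>, i.e. at infinity, and the moment bound keeps the one-dimensional weak limit from charging
  that set, so pushing it back through the decoding yields the limit on the orthant.\<close>

section \<open>Coding the orthant into the real line\<close>

definition cantor_digit :: "real \<Rightarrow> real" where
  "cantor_digit t = min 1 (max 0 (1/2 - 3/2 * cos (pi * t)))"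

lemma continuous_cantor_digit: "continuous_on UNIV cantor_digit"
  unfolding cantor_digit_def by (intro continuous_intros)

lemma cantor_digit_bounds: "0 \<le> cantor_digit t" "cantor_digit t \<le> 1"
  unfolding cantor_digit_def by auto

lemma cos_pi_even_shift: "cos (pi * (2 * of_int j + u)) = cos (pi * u)"
proof -
  have "pi * (2 * of_int j + u) = pi * u + (2 * pi) * of_int j" by (simp add: algebra_simps)
  then show ?thesis by (simp add: cos_add cos_int_2pin sin_int_2pin)
qed

lemma cantor_digit_low:
  assumes "0 \<le> u" "u \<le> 1/3"
  shows "cantor_digit (2 * of_int j + u) = 0"
proof -
  have "cos (pi / 3) \<le> cos (pi * u)"
    using assms by (intro cos_monotone_0_pi_le) auto
  then show ?thesis unfolding cantor_digit_def cos_pi_even_shift by (auto simp: cos_60)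
qed

lemma cantor_digit_high:
  assumes "2/3 \<le> u" "u \<le> 1"
  shows "cantor_digit (2 * of_int j + u) = 1"
proof -
  have "cos (pi * u) \<le> cos (2 * pi / 3)"
    using assms by (intro cos_monotone_0_pi_le) auto
  then show ?thesis unfolding cantor_digit_def cos_pi_even_shift by (auto simp: cos_120)
qed

lemma summable_ternary_series:
  fixes b :: "nat \<Rightarrow> real"
  assumes b: "\<And>k. b k = 0 \<or> b k = 1"
  shows "summable (\<lambda>k. 2 * b k / 3^(k+c))"
proof (rule summable_comparison_test'[where g="\<lambda>k. 2 * (1/3)^k"])
  show "summable (\<lambda>k. 2 * (1/3::real)^k)"
    by (intro summable_mult summable_geometric) auto
  fix n :: nat
  have "(3::real)^n \<le> 3^(n+c)" by (intro power_increasing) auto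
  then have "1 / (3::real)^(n+c) \<le> 1 / 3^n" by (intro divide_left_mono) auto
  then show "norm (2 * b n / 3^(n+c)) \<le> 2 * (1/3::real)^n"
    using b[of n] by (auto simp: power_divide)
qed

lemma ternary_series_bounds:
  fixes b :: "nat \<Rightarrow> real"
  assumes b: "\<And>k. b k = 0 \<or> b k = 1"
  shows "0 \<le> (\<Sum>k. 2 * b k / 3^(k + Suc c))" "(\<Sum>k. 2 * b k / 3^(k + Suc c)) \<le> 1 / 3^c"
proof -
  have s: "summable (\<lambda>k. 2 * b k / 3^(k + Suc c))" by (rule summable_ternary_series[OF b])
  show "0 \<le> (\<Sum>k. 2 * b k / 3^(k + Suc c))"
  proof (rule suminf_nonneg[OF s])
    show "0 \<le> 2 * b k / 3^(k + Suc c)" for k using b[of k] by auto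
  qed
  have g: "(\<lambda>k. (2 / 3^(Suc c)) * (1/3::real)^k) sums ((2 / 3^(Suc c)) * (1 / (1 - 1/3)))"
    by (intro sums_mult geometric_sums) auto
  have "(\<Sum>k. 2 * b k / 3^(k + Suc c)) \<le> (\<Sum>k. (2 / 3^(Suc c)) * (1/3::real)^k)"
  proof (rule suminf_le[OF _ s sums_summable[OF g]])
    fix k
    show "2 * b k / 3^(k + Suc c) \<le> (2 / 3^(Suc c)) * (1/3::real)^k"
      using b[of k] by (auto simp: power_add power_divide mult_ac)
  qed
  also have "\<dots> = 1 / 3^c" using sums_unique[OF g] by simp
  finally show "(\<Sum>k. 2 * b k / 3^(k + Suc c)) \<le> 1 / 3^c" .
qed

text \<open>Multiplying by \<open>3^K\<close> moves digit \<open>K\<close> to the first place after the point: the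
  earlier digits contribute an even integer and the later ones at most \<open>1/3\<close>.\<close>

lemma cantor_digit_ternary_series:
  fixes b :: "nat \<Rightarrow> real"
  assumes b: "\<And>k. b k = 0 \<or> b k = 1"
  shows "cantor_digit (3^K * (\<Sum>k. 2 * b k / 3^(k+1))) = b K"
proof -
  define a where "a k = 3^K * (2 * b k / 3^(k+1))" for k
  have sa: "summable a" unfolding a_def by (intro summable_mult summable_ternary_series[OF b])
  define j :: int where "j = (\<Sum>i<K. if b i = 1 then 3^(K - Suc i) else 0)"
  have head: "(\<Sum>i<K. a i) = 2 * of_int j"
  proof -
    have "a i = 2 * (if b i = 1 then 3^(K - Suc i) else 0)" if "i < K" for i
    proof -
      have "K = (K - Suc i) + (i+1)" using that by simp
      then have "(3::real)^K = 3^(K - Suc i) * 3^(i+1)" by (metis power_add)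
      then show ?thesis unfolding a_def using b[of i] by auto
    qed
    then have "(\<Sum>i<K. a i) = (\<Sum>i<K. 2 * (if b i = 1 then 3^(K - Suc i) else 0))"
      by (intro sum.cong) auto
    then show ?thesis unfolding j_def by (simp add: sum_distrib_left if_distrib cong: if_cong)
  qed
  have "3^K * (\<Sum>k. 2 * b k / 3^(k+1)) = (\<Sum>k. a k)"
    unfolding a_def by (intro suminf_mult[symmetric] summable_ternary_series[OF b])
  also have "\<dots> = (\<Sum>n. a (n + Suc K)) + (\<Sum>i<Suc K. a i)"
    by (rule suminf_split_initial_segment[OF sa])
  also have "(\<Sum>n. a (n + Suc K)) = (\<Sum>n. 2 * b (n + Suc K) / 3^(n + Suc 1))"
  proof (rule suminf_cong)
    fix n
    have "(3::real)^(n + Suc K + 1) = 3^K * 3^(n + Suc 1)" by (simp flip: power_add)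
    then show "a (n + Suc K) = 2 * b (n + Suc K) / 3^(n + Suc 1)" unfolding a_def by simp
  qed
  also have "(\<Sum>i<Suc K. a i) = 2 * of_int j + 2 * b K / 3"
    using head by (simp add: a_def)
  finally have eq: "3^K * (\<Sum>k. 2 * b k / 3^(k+1)) =
      2 * of_int j + (2 * b K / 3 + (\<Sum>n. 2 * b (n + Suc K) / 3^(n + Suc 1)))"
    by simp
  have "\<And>n. b (n + Suc K) = 0 \<or> b (n + Suc K) = 1" using b by auto
  note tail = ternary_series_bounds[of "\<lambda>n. b (n + Suc K)" 1, OF this]
  from b[of K] show ?thesis
  proof
    assume "b K = 0"
    with tail show ?thesis unfolding eq by (intro trans[OF cantor_digit_low]) simp_all
  next
    assume "b K = 1"
    with tail show ?thesis unfolding eq by (intro trans[OF cantor_digit_high]) simp_all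
  qed
qed

lemma floor_double_cases: "\<lfloor>2 * x\<rfloor> - 2 * \<lfloor>x\<rfloor> = 0 \<or> \<lfloor>2 * x\<rfloor> - 2 * \<lfloor>x\<rfloor> = (1::int)"
  for x :: real
proof -
  have x: "of_int \<lfloor>x\<rfloor> \<le> x" "x < of_int \<lfloor>x\<rfloor> + 1" by linarith+
  then have "2 * \<lfloor>x\<rfloor> \<le> \<lfloor>2 * x\<rfloor>" by (simp add: le_floor_iff)
  moreover have "2 * x < of_int (2 * \<lfloor>x\<rfloor> + 2)" using x by linarith
  then have "\<lfloor>2 * x\<rfloor> < 2 * \<lfloor>x\<rfloor> + 2" by (simp only: floor_less_iff)
  ultimately show ?thesis by linarith
qed

definition binary_digit :: "nat \<Rightarrow> real \<Rightarrow> real" where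
  "binary_digit m t = of_int (\<lfloor>2^(m+1) * t\<rfloor> - 2 * \<lfloor>2^m * t\<rfloor>)"

lemma binary_digit_01: "binary_digit m t = 0 \<or> binary_digit m t = 1"
proof -
  have "(2::real)^(m+1) * t = 2 * (2^m * t)" by simp
  then have "\<lfloor>2^(m+1) * t\<rfloor> - 2 * \<lfloor>2^m * t\<rfloor> = 0 \<or> \<lfloor>2^(m+1) * t\<rfloor> - 2 * \<lfloor>2^m * t\<rfloor> = (1::int)"
    by (metis floor_double_cases)
  then show ?thesis unfolding binary_digit_def by (elim disjE) simp_all
qed

lemma binary_digit_partial_sum:
  "(\<Sum>m<K. binary_digit m t / 2^(m+1)) = of_int \<lfloor>2^K * t\<rfloor> / 2^K - of_int \<lfloor>t\<rfloor>"
proof -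
  have "(\<Sum>m<K. binary_digit m t / 2^(m+1)) =
        (\<Sum>m<K. of_int \<lfloor>2^(Suc m) * t\<rfloor> / 2^(Suc m) - of_int \<lfloor>2^m * t\<rfloor> / 2^m)"
    by (intro sum.cong refl) (simp add: binary_digit_def field_simps)
  also have "\<dots> = of_int \<lfloor>2^K * t\<rfloor> / 2^K - of_int \<lfloor>t\<rfloor>"
    by (subst sum_lessThan_telescope[where f = "\<lambda>m. of_int \<lfloor>2^m * t\<rfloor> / 2^m"]) simp
  finally show ?thesis .
qed

lemma binary_digit_sums:
  assumes "0 \<le> t" "t < 1"
  shows "(\<lambda>m. binary_digit m t / 2^(m+1)) sums t"
proof -
  have "\<lfloor>t\<rfloor> = 0" using assms by (simp add: floor_eq_iff)
  have lo: "t - 1 / 2^K \<le> of_int \<lfloor>2^K * t\<rfloor> / 2^K" for K :: nat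
  proof -
    have "2^K * t - 1 \<le> of_int \<lfloor>2^K * t\<rfloor>" using floor_correct[of "2^K * t"] by simp
    then have "(2^K * t - 1) / 2^K \<le> of_int \<lfloor>2^K * t\<rfloor> / (2::real)^K"
      by (rule divide_right_mono) simp
    then show ?thesis by (simp add: diff_divide_distrib)
  qed
  have hi: "of_int \<lfloor>2^K * t\<rfloor> / 2^K \<le> t" for K :: nat
  proof -
    have "of_int \<lfloor>2^K * t\<rfloor> / 2^K \<le> 2^K * t / (2::real)^K"
      using of_int_floor_le by (rule divide_right_mono) simp
    then show ?thesis by simp
  qed
  have lim: "(\<lambda>K. t - 1 / (2::real)^K) \<longlonglongrightarrow> t - 0"
    by (intro tendsto_diff tendsto_const) (simp add: LIMSEQ_inverse_realpow_zero divide_inverse)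
  have "(\<lambda>K. of_int \<lfloor>2^K * t\<rfloor> / (2::real)^K) \<longlonglongrightarrow> t"
    by (rule real_tendsto_sandwich[OF always_eventually always_eventually _ tendsto_const])
       (use lo hi lim in auto)
  then show ?thesis unfolding sums_def binary_digit_partial_sum \<open>\<lfloor>t\<rfloor> = 0\<close> by simp
qed

definition coord_index :: "'n::finite \<Rightarrow> nat" where
  "coord_index = (SOME e. bij_betw e (UNIV::'n set) {0..<CARD('n)})"

lemma bij_coord_index: "bij_betw (coord_index :: 'n::finite \<Rightarrow> nat) UNIV {0..<CARD('n)}"
proof -
  have "\<exists>e. bij_betw e (UNIV::'n set) {0..<CARD('n)}" by (rule ex_bij_betw_finite_nat) simp
  then show ?thesis unfolding coord_index_def by (rule someI_ex)
qed

lemma coord_index_less: "coord_index (i::'n::finite) < CARD('n)"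
  using bij_coord_index bij_betwE by fastforce

lemma inv_coord_index: "inv_into UNIV coord_index (coord_index (i::'n::finite)) = i"
  by (meson bij_betw_def inv_into_f_f UNIV_I bij_coord_index)

definition interleaved_digit :: "nat \<Rightarrow> real^'n::finite \<Rightarrow> real" where
  "interleaved_digit k y = binary_digit (k div CARD('n)) (y $ inv_into UNIV coord_index (k mod CARD('n)))"

definition cantor_code :: "real^'n::finite \<Rightarrow> real" where
  "cantor_code y = (\<Sum>k. 2 * interleaved_digit k y / 3^(k+1))"

definition cantor_decode :: "real \<Rightarrow> real^'n::finite" where
  "cantor_decode x = (\<chi> i. \<Sum>m. cantor_digit (3^(m * CARD('n) + coord_index i) * x) / 2^(m+1))"

lemma interleaved_digit_01: "interleaved_digit k y = 0 \<or> interleaved_digit k y = 1"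
  unfolding interleaved_digit_def by (rule binary_digit_01)

lemma interleaved_digit_coord:
  "interleaved_digit (m * CARD('n) + coord_index i) (y::real^'n::finite) = binary_digit m (y $ i)"
proof -
  have "(m * CARD('n) + coord_index i) div CARD('n) = m"
    "(m * CARD('n) + coord_index i) mod CARD('n) = coord_index i"
    using coord_index_less[of i] by simp_all
  then show ?thesis unfolding interleaved_digit_def by (simp add: inv_coord_index)
qed

lemma summable_halves: "summable (\<lambda>m. c / (2::real)^(m+1))"
proof -
  have "summable (\<lambda>m. (c/2) * (1/2::real)^m)" by (intro summable_mult summable_geometric) auto
  then show ?thesis by (simp add: power_divide)
qed

lemma cantor_decode_code:
  assumes "\<And>i. 0 \<le> y $ i" "\<And>i. y $ i < 1"
  shows "cantor_decode (cantor_code y) = (y::real^'n::finite)"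
proof -
  have "(\<Sum>m. cantor_digit (3^(m * CARD('n) + coord_index i) * cantor_code y) / 2^(m+1)) = y $ i" for i
  proof -
    have "cantor_digit (3^(m * CARD('n) + coord_index i) * cantor_code y) = binary_digit m (y $ i)" for m
      unfolding cantor_code_def
      by (subst cantor_digit_ternary_series) (auto simp: interleaved_digit_01 interleaved_digit_coord)
    then show ?thesis using sums_unique[OF binary_digit_sums[OF assms]] by simp
  qed
  then show ?thesis unfolding cantor_decode_def by (simp add: vec_eq_iff)
qed

lemma cantor_code_bounds: "0 \<le> cantor_code y" "cantor_code y \<le> 1"
  using ternary_series_bounds[of "\<lambda>k. interleaved_digit k y" 0, OF interleaved_digit_01]
  unfolding cantor_code_def by simp_all

lemma borel_measurable_cantor_code[measurable]: "cantor_code \<in> borel_measurable borel"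
  unfolding cantor_code_def interleaved_digit_def binary_digit_def by measurable

lemma cantor_decode_bounds: "0 \<le> cantor_decode x $ (i::'n::finite)" "cantor_decode x $ i \<le> 1"
proof -
  let ?f = "\<lambda>m. cantor_digit (3^(m * CARD('n) + coord_index i) * x) / (2::real)^(m+1)"
  have s: "summable ?f"
    by (rule summable_comparison_test'[OF summable_halves[of 1]])
       (simp add: cantor_digit_bounds divide_right_mono)
  have e: "cantor_decode x $ i = (\<Sum>m. ?f m)" unfolding cantor_decode_def by simp
  show "0 \<le> cantor_decode x $ i" unfolding e
    by (intro suminf_nonneg[OF s]) (simp add: cantor_digit_bounds)
  have "(\<Sum>m. ?f m) \<le> (\<Sum>m. 1 / (2::real)^(m+1))"
    by (intro suminf_le[OF _ s summable_halves]) (simp add: cantor_digit_bounds divide_right_mono)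
  also have "\<dots> = 1"
    using sums_unique[OF power_half_series] by (simp add: power_divide)
  finally show "cantor_decode x $ i \<le> 1" unfolding e .
qed

lemma continuous_cantor_decode: "continuous_on UNIV (cantor_decode :: real \<Rightarrow> real^'n::finite)"
  unfolding cantor_decode_def
proof (intro continuous_on_vec_lambda)
  fix i :: 'n
  let ?f = "\<lambda>m x. cantor_digit (3^(m * CARD('n) + coord_index i) * x) / (2::real)^(m+1)"
  have u: "uniform_limit UNIV (\<lambda>n x. \<Sum>m<n. ?f m x) (\<lambda>x. \<Sum>m. ?f m x) sequentially"
    by (rule Weierstrass_m_test[OF _ summable_halves[of 1]])
       (auto simp: cantor_digit_bounds divide_right_mono)
  have "continuous_on UNIV (?f m)" for m
    by (intro continuous_intros continuous_on_compose2[OF continuous_cantor_digit]) auto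
  then show "continuous_on UNIV (\<lambda>x. \<Sum>m. ?f m x)"
    by (intro uniform_limit_theorem[OF _ u] always_eventually allI continuous_on_sum) auto
qed

lemma borel_measurable_vec_lambda:
  fixes f :: "'a \<Rightarrow> 'n::finite \<Rightarrow> real"
  assumes "\<And>i. (\<lambda>x. f x i) \<in> borel_measurable M"
  shows "(\<lambda>x. \<chi> i. f x i) \<in> borel_measurable M"
proof (rule borel_measurable_euclidean_space[THEN iffD2], intro ballI)
  fix b :: "real^'n" assume "b \<in> Basis"
  then obtain j where "b = axis j 1" by (auto simp: Basis_vec_def)
  then show "(\<lambda>x. (\<chi> i. f x i) \<bullet> b) \<in> borel_measurable M"
    using assms by (simp add: inner_axis)
qed

lemma closed_nonneg_orthant: "closed (nonneg_orthant :: (real^'n::finite) set)"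
  unfolding nonneg_orthant_def by (intro closed_Collect_all closed_Collect_le continuous_intros)

lemma nonneg_orthant_sets[measurable]: "nonneg_orthant \<in> sets borel"
  using closed_nonneg_orthant by (rule borel_closed)

definition compress :: "real^'n::finite \<Rightarrow> real^'n" where
  "compress z = (\<chi> i. max 0 (z $ i) / (1 + max 0 (z $ i)))"

definition expand :: "real^'n::finite \<Rightarrow> real^'n" where
  "expand y = (\<chi> i. y $ i / (1 - y $ i))"

definition orthant_code :: "real^'n::finite \<Rightarrow> real" where
  "orthant_code z = cantor_code (compress z)"

definition orthant_decode :: "real \<Rightarrow> real^'n::finite" where
  "orthant_decode x = expand (cantor_decode x)"

lemma compress_bounds: "0 \<le> compress z $ i" "compress z $ i < 1"
  unfolding compress_def by (auto simp: divide_less_eq)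

lemma cantor_decode_orthant_code: "cantor_decode (orthant_code z) = compress z"
  unfolding orthant_code_def by (rule cantor_decode_code) (auto simp: compress_bounds)

lemma orthant_decode_code:
  assumes "z \<in> nonneg_orthant"
  shows "orthant_decode (orthant_code z) = z"
proof -
  have "expand (compress z) $ i = z $ i" for i
  proof -
    have "0 \<le> z $ i" using assms by (simp add: nonneg_orthant_def)
    then show ?thesis unfolding expand_def compress_def by (simp add: field_simps)
  qed
  then show ?thesis unfolding orthant_decode_def cantor_decode_orthant_code by (simp add: vec_eq_iff)
qed

lemma orthant_decode_in: "orthant_decode x \<in> nonneg_orthant"
  unfolding nonneg_orthant_def orthant_decode_def expand_def
  using cantor_decode_bounds[of x] by (auto intro!: divide_nonneg_nonneg)

lemma borel_measurable_compress[measurable]: "compress \<in> borel_measurable borel"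
proof -
  have "continuous_on UNIV compress"
    unfolding compress_def by (intro continuous_intros) (auto simp: add_nonneg_pos)
  then show ?thesis by (rule borel_measurable_continuous_onI)
qed

lemma borel_measurable_orthant_code[measurable]: "orthant_code \<in> borel_measurable borel"
  unfolding orthant_code_def[abs_def] by measurable

lemma borel_measurable_orthant_decode[measurable]:
  "(orthant_decode :: real \<Rightarrow> real^'n::finite) \<in> borel_measurable borel"
proof -
  have [measurable]: "(\<lambda>y::real^'n. y $ i) \<in> borel_measurable borel" for i
    by (intro borel_measurable_continuous_onI continuous_intros)
  have [measurable]: "(expand :: real^'n \<Rightarrow> real^'n) \<in> borel_measurable borel"
    unfolding expand_def[abs_def] by (intro borel_measurable_vec_lambda) measurable
  have [measurable]: "(cantor_decode :: real \<Rightarrow> real^'n) \<in> borel_measurable borel"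
    using continuous_cantor_decode by (rule borel_measurable_continuous_onI)
  show ?thesis unfolding orthant_decode_def[abs_def] by measurable
qed

lemma isCont_orthant_decode:
  assumes "\<And>i::'n. (cantor_decode x :: real^'n) $ i < 1"
  shows "isCont (orthant_decode :: real \<Rightarrow> real^'n::finite) x"
proof -
  have "isCont (cantor_decode :: real \<Rightarrow> real^'n) x"
    by (metis continuous_cantor_decode continuous_on_eq_continuous_at open_UNIV UNIV_I)
  then have "isCont (\<lambda>x. (cantor_decode x :: real^'n) $ i / (1 - (cantor_decode x :: real^'n) $ i)) x" for i
    using assms[of i] by (intro continuous_intros) auto
  then show ?thesis unfolding orthant_decode_def[abs_def] expand_def isCont_def
    by (intro tendsto_vec_lambda) auto
qed

lemma closed_cantor_decode_top: "closed {x. \<exists>i::'n::finite. 1 \<le> (cantor_decode x :: real^'n) $ i}"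
proof -
  have "closed {x. 1 \<le> (cantor_decode x :: real^'n) $ i}" for i
    by (intro closed_Collect_le continuous_intros continuous_on_compose2[OF continuous_cantor_decode]) auto
  then show ?thesis by (simp add: Collect_ex_eq closed_UN)
qed

section \<open>Polynomial growth\<close>

definition poly_growth_on :: "'a::real_normed_vector set \<Rightarrow> nat \<Rightarrow> ('a \<Rightarrow> real) \<Rightarrow> bool" where
  "poly_growth_on S D G \<longleftrightarrow> (\<exists>A\<ge>0. \<forall>z\<in>S. \<bar>G z\<bar> \<le> A * (1 + norm z ^ D))"

lemma power_le_one_plus_power:
  fixes t :: real
  assumes "e \<le> D" "0 \<le> t"
  shows "t ^ e \<le> 1 + t ^ D"
proof (cases "t \<le> 1")
  case True
  then have "t ^ e \<le> 1" using assms by (intro power_le_one) auto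
  moreover have "0 \<le> t ^ D" using assms by simp
  ultimately show ?thesis by linarith
next
  case False
  then have "t ^ e \<le> t ^ D" using assms by (intro power_increasing) auto
  then show ?thesis by simp
qed

lemma poly_growth_on_mono:
  assumes "poly_growth_on S D G" "D \<le> D'"
  shows "poly_growth_on S D' G"
proof -
  obtain A where A: "0 \<le> A" "\<forall>z\<in>S. \<bar>G z\<bar> \<le> A * (1 + norm z ^ D)"
    using assms(1) unfolding poly_growth_on_def by blast
  have "\<bar>G z\<bar> \<le> (2 * A) * (1 + norm z ^ D')" if "z \<in> S" for z
  proof -
    have "norm z ^ D \<le> 1 + norm z ^ D'" using assms(2) by (intro power_le_one_plus_power) auto
    moreover have "0 \<le> norm z ^ D'" by simp
    ultimately have "1 + norm z ^ D \<le> 2 + 2 * norm z ^ D'" by linarith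
    then have "1 + norm z ^ D \<le> 2 * (1 + norm z ^ D')" by simp
    then have "A * (1 + norm z ^ D) \<le> A * (2 * (1 + norm z ^ D'))"
      using A(1) by (rule mult_left_mono)
    moreover have "\<bar>G z\<bar> \<le> A * (1 + norm z ^ D)" using A(2) that by blast
    ultimately show ?thesis by (simp add: ac_simps)
  qed
  then show ?thesis unfolding poly_growth_on_def using A(1) by (intro exI[of _ "2 * A"]) simp
qed

lemma abs_monomial_le:
  fixes x :: "real^'n::finite"
  shows "\<bar>\<Prod>i\<in>UNIV. (x $ i) ^ \<alpha> i\<bar> \<le> norm x ^ (\<Sum>i\<in>UNIV. \<alpha> i)"
proof -
  have "\<bar>\<Prod>i\<in>UNIV. (x $ i) ^ \<alpha> i\<bar> = (\<Prod>i\<in>UNIV. \<bar>x $ i\<bar> ^ \<alpha> i)"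
    by (simp add: abs_prod power_abs)
  also have "\<dots> \<le> (\<Prod>i\<in>UNIV. norm x ^ \<alpha> i)"
    by (intro prod_mono conjI power_mono component_le_norm_cart) auto
  also have "\<dots> = norm x ^ (\<Sum>i\<in>UNIV. \<alpha> i)"
    by (simp add: power_sum)
  finally show ?thesis .
qed

lemma pdeg_ge:
  assumes "poly_coeffs c" "c \<alpha> \<noteq> 0"
  shows "(\<Sum>i\<in>UNIV. \<alpha> i) \<le> pdeg c"
proof -
  have "{(\<Sum>i\<in>UNIV. \<alpha> i) | \<alpha>. c \<alpha> \<noteq> 0} = (\<lambda>\<alpha>. \<Sum>i\<in>UNIV. \<alpha> i) ` {\<alpha>. c \<alpha> \<noteq> 0}" by auto
  then have "finite {(\<Sum>i\<in>UNIV. \<alpha> i) | \<alpha>. c \<alpha> \<noteq> 0}"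
    using assms(1) unfolding poly_coeffs_def by simp
  with assms(2) show ?thesis unfolding pdeg_def by (intro Max_ge) auto
qed

lemma abs_peval_le:
  fixes c :: "('n::finite \<Rightarrow> nat) \<Rightarrow> real"
  assumes "poly_coeffs c"
  shows "\<bar>peval c x\<bar> \<le> (\<Sum>\<alpha>\<in>{\<alpha>. c \<alpha> \<noteq> 0}. \<bar>c \<alpha>\<bar>) * (1 + norm x ^ pdeg c)"
proof -
  have "\<bar>peval c x\<bar> \<le> (\<Sum>\<alpha>\<in>{\<alpha>. c \<alpha> \<noteq> 0}. \<bar>c \<alpha>\<bar> * \<bar>\<Prod>i\<in>UNIV. (x $ i) ^ \<alpha> i\<bar>)"
    unfolding peval_def by (metis (no_types, lifting) abs_mult sum.cong sum_abs)
  also have "\<dots> \<le> (\<Sum>\<alpha>\<in>{\<alpha>. c \<alpha> \<noteq> 0}. \<bar>c \<alpha>\<bar> * (1 + norm x ^ pdeg c))"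
  proof (intro sum_mono mult_left_mono)
    fix \<alpha> assume "\<alpha> \<in> {\<alpha>. c \<alpha> \<noteq> 0}"
    then have "norm x ^ (\<Sum>i\<in>UNIV. \<alpha> i) \<le> 1 + norm x ^ pdeg c"
      using pdeg_ge[OF assms] by (intro power_le_one_plus_power) auto
    then show "\<bar>\<Prod>i\<in>UNIV. (x $ i) ^ \<alpha> i\<bar> \<le> 1 + norm x ^ pdeg c"
      using abs_monomial_le[of x \<alpha>] by linarith
  qed simp
  also have "\<dots> = (\<Sum>\<alpha>\<in>{\<alpha>. c \<alpha> \<noteq> 0}. \<bar>c \<alpha>\<bar>) * (1 + norm x ^ pdeg c)"
    by (simp add: sum_distrib_right)
  finally show ?thesis .
qed

lemma continuous_peval: "continuous_on UNIV (peval c)"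
  unfolding peval_def by (intro continuous_intros)

lemma borel_measurable_peval[measurable]: "peval c \<in> borel_measurable borel"
  using continuous_peval by (rule borel_measurable_continuous_onI)

lemma poly_growth_peval: "poly_coeffs c \<Longrightarrow> poly_growth_on S (pdeg c) (peval c)"
  unfolding poly_growth_on_def by (blast intro: abs_peval_le sum_nonneg abs_ge_zero)

lemma poly_growth_piecewise_poly:
  assumes "cont_piecewise_poly_on S phi P r"
  shows "poly_growth_on S (pw_deg P r) phi"
proof -
  have "finite (insert 0 {pdeg (P j) | j. j < r})"
    by (simp add: setcompr_eq_image)
  then have "pdeg (P j) \<le> pw_deg P r" if "j < r" for j
    unfolding pw_deg_def using that by (intro Max_ge) auto
  then have "\<forall>j<r. poly_growth_on S (pw_deg P r) (peval (P j))"
    using assms unfolding cont_piecewise_poly_on_def by (blast intro: poly_growth_on_mono poly_growth_peval)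
  then obtain A where A: "\<And>j. j < r \<Longrightarrow> 0 \<le> A j"
    "\<And>j z. j < r \<Longrightarrow> z \<in> S \<Longrightarrow> \<bar>peval (P j) z\<bar> \<le> A j * (1 + norm z ^ pw_deg P r)"
    unfolding poly_growth_on_def by metis
  have "\<bar>phi z\<bar> \<le> (\<Sum>j<r. A j) * (1 + norm z ^ pw_deg P r)" if "z \<in> S" for z
  proof -
    obtain j where j: "j < r" "phi z = peval (P j) z"
      using assms \<open>z \<in> S\<close> unfolding cont_piecewise_poly_on_def by blast
    have "A j \<le> (\<Sum>j<r. A j)"
      using j(1) A(1) by (intro member_le_sum) auto
    then have "A j * (1 + norm z ^ pw_deg P r) \<le> (\<Sum>j<r. A j) * (1 + norm z ^ pw_deg P r)"
      by (rule mult_right_mono) simp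
    then show ?thesis unfolding j(2) using A(2)[OF j(1) that] by linarith
  qed
  moreover have "0 \<le> (\<Sum>j<r. A j)" using A(1) by (intro sum_nonneg) simp
  ultimately show ?thesis unfolding poly_growth_on_def by blast
qed

section \<open>Measures with a bounded moment\<close>

definition moment_bounded_on :: "'a::real_normed_vector set \<Rightarrow> nat \<Rightarrow> real \<Rightarrow> 'a measure \<Rightarrow> bool" where
  "moment_bounded_on S d C \<mu> \<longleftrightarrow> sets \<mu> = sets borel \<and> finite_measure \<mu> \<and> (AE x in \<mu>. x \<in> S)
     \<and> (\<integral>\<^sup>+x. ennreal (norm x ^ d) \<partial>\<mu>) \<le> ennreal C"

lemma measurable_sets_borel:
  "sets M = sets borel \<Longrightarrow> f \<in> borel_measurable borel \<Longrightarrow> f \<in> borel_measurable M"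
  using measurable_cong_sets by blast

lemma integral_le_if_nn_integral_le:
  fixes f :: "'a \<Rightarrow> real"
  assumes "f \<in> borel_measurable M" "\<And>x. 0 \<le> f x" "(\<integral>\<^sup>+x. ennreal (f x) \<partial>M) \<le> ennreal c" "0 \<le> c"
  shows "(\<integral>x. f x \<partial>M) \<le> c"
proof -
  have "(\<integral>x. f x \<partial>M) = enn2real (\<integral>\<^sup>+x. ennreal (f x) \<partial>M)"
    using assms by (intro integral_eq_nn_integral) auto
  also have "\<dots> \<le> c"
    using assms by (metis enn2real_ennreal enn2real_mono ennreal_neq_top top.not_eq_extremum)
  finally show ?thesis .
qed

lemma integrable_norm_power:
  assumes "moment_bounded_on S d C \<mu>"
  shows "integrable \<mu> (\<lambda>x. norm x ^ d)"
proof (rule integrableI_nonneg)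
  show "(\<lambda>x. norm x ^ d) \<in> borel_measurable \<mu>"
    using assms unfolding moment_bounded_on_def by (auto intro: measurable_sets_borel)
  have "(\<integral>\<^sup>+x. ennreal (norm x ^ d) \<partial>\<mu>) \<le> ennreal C"
    using assms unfolding moment_bounded_on_def by blast
  then show "(\<integral>\<^sup>+x. ennreal (norm x ^ d) \<partial>\<mu>) < \<infinity>"
    by (simp add: le_less_trans)
qed auto

lemma integral_norm_power_le:
  assumes "moment_bounded_on S d C \<mu>" "0 \<le> C"
  shows "(\<integral>x. norm x ^ d \<partial>\<mu>) \<le> C"
  using assms unfolding moment_bounded_on_def
  by (intro integral_le_if_nn_integral_le) (auto intro: measurable_sets_borel)

lemma integrable_poly_growth:
  assumes \<mu>: "moment_bounded_on S d C \<mu>" and G: "poly_growth_on S D G" "G \<in> borel_measurable borel"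
    and "D \<le> d"
  shows "integrable \<mu> G"
proof -
  obtain A where A: "0 \<le> A" "\<forall>z\<in>S. \<bar>G z\<bar> \<le> A * (1 + norm z ^ D)"
    using G(1) unfolding poly_growth_on_def by blast
  interpret finite_measure \<mu> using \<mu> unfolding moment_bounded_on_def by blast
  have "integrable \<mu> (\<lambda>x. A * (2 + norm x ^ d))"
    using integrable_norm_power[OF \<mu>] by (intro integrable_mult_right integrable_add) auto
  then show ?thesis
  proof (rule Bochner_Integration.integrable_bound)
    show "G \<in> borel_measurable \<mu>"
      using \<mu> G(2) unfolding moment_bounded_on_def by (auto intro: measurable_sets_borel)
    have "AE z in \<mu>. z \<in> S" using \<mu> unfolding moment_bounded_on_def by blast
    then show "AE z in \<mu>. norm (G z) \<le> norm (A * (2 + norm z ^ d))"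
    proof eventually_elim
      case (elim z)
      have "norm z ^ D \<le> 1 + norm z ^ d" using \<open>D \<le> d\<close> by (intro power_le_one_plus_power) auto
      then have "A * (1 + norm z ^ D) \<le> A * (2 + norm z ^ d)" using A(1) by (intro mult_left_mono) auto
      then show ?case using A elim by auto
    qed
  qed
qed

definition radial_cutoff :: "real \<Rightarrow> 'a::real_normed_vector \<Rightarrow> real" where
  "radial_cutoff R z = max 0 (min 1 (R + 1 - norm z))"

lemma radial_cutoff_bounds: "0 \<le> radial_cutoff R z" "radial_cutoff R z \<le> 1"
  unfolding radial_cutoff_def by auto

lemma continuous_radial_cutoff: "continuous_on UNIV (radial_cutoff R)"
  unfolding radial_cutoff_def by (intro continuous_intros)

lemma borel_measurable_radial_cutoff[measurable]: "radial_cutoff R \<in> borel_measurable borel"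
  using continuous_radial_cutoff by (rule borel_measurable_continuous_onI)

lemma abs_cutoff_error_le:
  assumes "D < d" "0 \<le> A" "1 \<le> R" "\<bar>G z\<bar> \<le> A * (1 + norm z ^ D)"
  shows "\<bar>G z - G z * radial_cutoff R z\<bar> \<le> 2 * A / R * norm z ^ d"
proof -
  have "G z - G z * radial_cutoff R z = G z * (1 - radial_cutoff R z)"
    by (simp add: algebra_simps)
  then have e: "\<bar>G z - G z * radial_cutoff R z\<bar> = \<bar>G z\<bar> * (1 - radial_cutoff R z)"
    using radial_cutoff_bounds[of R z] by (simp add: abs_mult)
  show ?thesis
  proof (cases "norm z \<le> R")
    case True
    then show ?thesis unfolding e radial_cutoff_def using assms by auto
  next
    case False
    then have z: "1 \<le> norm z" "R < norm z" using assms by auto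
    have "\<bar>G z\<bar> * (1 - radial_cutoff R z) \<le> A * (1 + norm z ^ D)"
      using radial_cutoff_bounds[of R z] assms(4) by (smt (verit) abs_ge_zero mult_left_le)
    also have "\<dots> \<le> A * (2 * norm z ^ D)"
      using z assms(2) by (intro mult_left_mono) (auto simp: one_le_power)
    also have "\<dots> \<le> 2 * A / R * norm z ^ d"
    proof -
      have "R * norm z ^ D \<le> norm z ^ (D + 1)"
        using z by (simp add: mult_right_mono)
      also have "\<dots> \<le> norm z ^ d" using z assms(1) by (intro power_increasing) auto
      finally have "R * norm z ^ D \<le> norm z ^ d" .
      then show ?thesis
        using assms(2,3) by (simp add: field_simps mult_left_mono)
    qed
    finally show ?thesis unfolding e .
  qed
qed

lemma integral_cutoff_error_le:
  assumes \<mu>: "moment_bounded_on S d C \<mu>" "0 \<le> C"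
    and "D < d" "0 \<le> A" "1 \<le> R"
    and G: "G \<in> borel_measurable borel" "\<forall>z\<in>S. \<bar>G z\<bar> \<le> A * (1 + norm z ^ D)"
  shows "\<bar>(\<integral>z. G z \<partial>\<mu>) - (\<integral>z. G z * radial_cutoff R z \<partial>\<mu>)\<bar> \<le> 2 * A * C / R"
proof -
  have sets: "sets \<mu> = sets borel" and AE_S: "AE z in \<mu>. z \<in> S"
    using \<mu>(1) unfolding moment_bounded_on_def by blast+
  have "poly_growth_on S D G" unfolding poly_growth_on_def using assms(4) G(2) by blast
  then have iG: "integrable \<mu> G"
    using assms(3) by (intro integrable_poly_growth[OF \<mu>(1) _ G(1)]) auto
  have ig: "integrable \<mu> (\<lambda>z. G z * radial_cutoff R z)"
  proof (rule Bochner_Integration.integrable_bound[OF iG])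
    show "(\<lambda>z. G z * radial_cutoff R z) \<in> borel_measurable \<mu>"
      using G(1) by (intro measurable_sets_borel[OF sets] borel_measurable_times borel_measurable_radial_cutoff)
    have "norm (G z * radial_cutoff R z) \<le> norm (G z)" for z
      using radial_cutoff_bounds[of R z] by (simp add: abs_mult mult_left_le)
    then show "AE z in \<mu>. norm (G z * radial_cutoff R z) \<le> norm (G z)" by simp
  qed
  have "\<bar>(\<integral>z. G z \<partial>\<mu>) - (\<integral>z. G z * radial_cutoff R z \<partial>\<mu>)\<bar>
      = \<bar>\<integral>z. G z - G z * radial_cutoff R z \<partial>\<mu>\<bar>"
    using iG ig by simp
  also have "\<dots> \<le> (\<integral>z. \<bar>G z - G z * radial_cutoff R z\<bar> \<partial>\<mu>)"
    by (rule integral_abs_bound)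
  also have "\<dots> \<le> (\<integral>z. 2 * A / R * norm z ^ d \<partial>\<mu>)"
  proof (rule integral_mono_AE')
    show "integrable \<mu> (\<lambda>z. 2 * A / R * norm z ^ d)"
      using integrable_norm_power[OF \<mu>(1)] by simp
    show "AE z in \<mu>. \<bar>G z - G z * radial_cutoff R z\<bar> \<le> 2 * A / R * norm z ^ d"
      using AE_S by eventually_elim (use abs_cutoff_error_le assms G(2) in blast)
  qed (use assms in auto)
  also have "\<dots> = 2 * A / R * (\<integral>z. norm z ^ d \<partial>\<mu>)" by simp
  also have "\<dots> \<le> 2 * A / R * C"
    using assms by (intro mult_left_mono integral_norm_power_le) auto
  finally show ?thesis by simp
qed

section \<open>Weak convergence relative to a set\<close>

definition weak_conv_on :: "'a::topological_space set \<Rightarrow> (nat \<Rightarrow> 'a measure) \<Rightarrow> 'a measure \<Rightarrow> bool" where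
  "weak_conv_on S \<mu>s \<mu> \<longleftrightarrow>
     (\<forall>(g :: 'a \<Rightarrow> real) B. g \<in> borel_measurable borel \<longrightarrow> continuous_on S g \<longrightarrow> (\<forall>z\<in>S. \<bar>g z\<bar> \<le> B) \<longrightarrow>
        (\<lambda>j. \<integral>x. g x \<partial>\<mu>s j) \<longlonglongrightarrow> (\<integral>x. g x \<partial>\<mu>))"

lemma weak_conv_onD:
  fixes g :: "'a::topological_space \<Rightarrow> real"
  assumes "weak_conv_on S \<mu>s \<mu>" "g \<in> borel_measurable borel" "continuous_on S g" "\<And>z. z \<in> S \<Longrightarrow> \<bar>g z\<bar> \<le> B"
  shows "(\<lambda>j. \<integral>x. g x \<partial>\<mu>s j) \<longlonglongrightarrow> (\<integral>x. g x \<partial>\<mu>)"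
  using assms unfolding weak_conv_on_def by blast

lemma weak_conv_on_nn_integral_norm_power_le:
  fixes \<mu> :: "'a::real_normed_vector measure"
  assumes conv: "weak_conv_on S \<mu>s \<mu>" and \<mu>: "sets \<mu> = sets borel" "finite_measure \<mu>"
    and \<mu>s: "\<And>j. sets (\<mu>s j) = sets borel" "\<And>j. (\<integral>\<^sup>+x. ennreal (norm x ^ d) \<partial>\<mu>s j) \<le> ennreal C"
    and "0 \<le> C"
  shows "(\<integral>\<^sup>+x. ennreal (norm x ^ d) \<partial>\<mu>) \<le> ennreal C"
proof -
  interpret finite_measure \<mu> by (rule \<mu>(2))
  define h where "h L z = min (real L) (norm z ^ d)" for L :: nat and z :: 'a
  have h_measurable[measurable]: "h L \<in> borel_measurable borel" for L
    unfolding h_def[abs_def] by measurable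
  have h_nonneg: "0 \<le> h L z" for L z unfolding h_def by simp
  have truncated: "(\<integral>\<^sup>+z. ennreal (h L z) \<partial>\<mu>) \<le> ennreal C" for L
  proof -
    have "(\<integral>z. h L z \<partial>\<mu>s j) \<le> C" for j
    proof (rule integral_le_if_nn_integral_le[OF _ h_nonneg _ \<open>0 \<le> C\<close>])
      show "h L \<in> borel_measurable (\<mu>s j)" by (rule measurable_sets_borel[OF \<mu>s(1)]) simp
      have "(\<integral>\<^sup>+z. ennreal (h L z) \<partial>\<mu>s j) \<le> (\<integral>\<^sup>+z. ennreal (norm z ^ d) \<partial>\<mu>s j)"
        by (intro nn_integral_mono ennreal_leI) (simp add: h_def)
      then show "(\<integral>\<^sup>+z. ennreal (h L z) \<partial>\<mu>s j) \<le> ennreal C"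
        using \<mu>s(2) by (rule order_trans)
    qed
    moreover have "(\<lambda>j. \<integral>z. h L z \<partial>\<mu>s j) \<longlonglongrightarrow> (\<integral>z. h L z \<partial>\<mu>)"
      by (rule weak_conv_onD[OF conv, where B = "real L"]) (auto simp: h_def intro!: continuous_intros)
    ultimately have "(\<integral>z. h L z \<partial>\<mu>) \<le> C"
      by (intro LIMSEQ_le_const2) auto
    moreover have "integrable \<mu> (h L)"
      by (rule integrable_const_bound[where B = "real L"])
         (auto simp: h_def intro!: AE_I2 measurable_sets_borel[OF \<mu>(1)])
    ultimately show ?thesis
      by (simp add: nn_integral_eq_integral h_nonneg ennreal_leI)
  qed
  have "ennreal (norm z ^ d) = (SUP L. ennreal (h L z))" for z
  proof (rule antisym)
    obtain L :: nat where "norm z ^ d \<le> real L" using real_arch_simple by blast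
    then have "h L z = norm z ^ d" unfolding h_def by simp
    then show "ennreal (norm z ^ d) \<le> (SUP L. ennreal (h L z))"
      by (metis UNIV_I SUP_upper order_refl)
    show "(SUP L. ennreal (h L z)) \<le> ennreal (norm z ^ d)"
      by (rule SUP_least) (auto simp: h_def intro!: ennreal_leI)
  qed
  then have "(\<integral>\<^sup>+z. ennreal (norm z ^ d) \<partial>\<mu>) = (\<integral>\<^sup>+z. (SUP L. ennreal (h L z)) \<partial>\<mu>)"
    by simp
  also have "\<dots> = (SUP L. (\<integral>\<^sup>+z. ennreal (h L z) \<partial>\<mu>))"
    by (rule nn_integral_monotone_convergence_SUP)
       (auto simp: incseq_def le_fun_def h_def intro!: ennreal_leI measurable_sets_borel[OF \<mu>(1)])
  also have "\<dots> \<le> ennreal C" by (rule SUP_least) (rule truncated)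
  finally show ?thesis .
qed

text \<open>Uniform integrability: since \<open>D < d\<close>, the bounded moment makes the contribution of
  \<open>norm z > R\<close> to the integral of \<open>G\<close> at most \<open>O(1/R)\<close>, uniformly along the sequence.\<close>

lemma weak_conv_on_tendsto_integral_poly_growth:
  assumes conv: "weak_conv_on S \<mu>s \<mu>"
    and \<mu>s: "\<And>j. moment_bounded_on S d C (\<mu>s j)" and \<mu>: "moment_bounded_on S d C \<mu>" and "0 \<le> C"
    and "D < d" and G: "G \<in> borel_measurable borel" "continuous_on S G" "poly_growth_on S D G"
  shows "(\<lambda>j. \<integral>x. G x \<partial>\<mu>s j) \<longlonglongrightarrow> (\<integral>x. G x \<partial>\<mu>)"
proof (rule LIMSEQ_I)
  fix \<epsilon> :: real assume "0 < \<epsilon>"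
  obtain A where A: "0 \<le> A" "\<forall>z\<in>S. \<bar>G z\<bar> \<le> A * (1 + norm z ^ D)"
    using G(3) unfolding poly_growth_on_def by blast
  define R where "R = 6 * A * C / \<epsilon> + 1"
  have "1 \<le> R" using \<open>0 < \<epsilon>\<close> A(1) \<open>0 \<le> C\<close> by (simp add: R_def)
  moreover have "2 * A * C * 3 < \<epsilon> * R"
    using \<open>0 < \<epsilon>\<close> by (simp add: R_def field_simps)
  ultimately have R: "1 \<le> R" "2 * A * C / R < \<epsilon> / 3"
    by (simp_all add: field_simps)
  define g where "g z = G z * radial_cutoff R z" for z
  have "\<bar>g z\<bar> \<le> A * (1 + (R + 1) ^ D)" if "z \<in> S" for z
  proof (cases "R + 1 \<le> norm z")
    case True
    then show ?thesis using A(1) R(1) by (simp add: g_def radial_cutoff_def)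
  next
    case False
    have "\<bar>g z\<bar> \<le> \<bar>G z\<bar>"
      using radial_cutoff_bounds[of R z] by (simp add: g_def abs_mult mult_left_le)
    also have "\<dots> \<le> A * (1 + norm z ^ D)" using A(2) that by blast
    also have "\<dots> \<le> A * (1 + (R + 1) ^ D)"
      using False A(1) by (intro mult_left_mono add_left_mono power_mono) auto
    finally show ?thesis .
  qed
  moreover have "continuous_on S g"
    unfolding g_def by (intro continuous_on_mult G(2) continuous_on_subset[OF continuous_radial_cutoff]) auto
  ultimately have "(\<lambda>j. \<integral>z. g z \<partial>\<mu>s j) \<longlonglongrightarrow> (\<integral>z. g z \<partial>\<mu>)"
    using G(1) by (intro weak_conv_onD[OF conv]) (auto simp: g_def)
  then obtain N where N: "\<And>j. N \<le> j \<Longrightarrow> \<bar>(\<integral>z. g z \<partial>\<mu>s j) - (\<integral>z. g z \<partial>\<mu>)\<bar> < \<epsilon> / 3"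
    using \<open>0 < \<epsilon>\<close> by (metis LIMSEQ_D real_norm_def zero_less_divide_iff zero_less_numeral)
  have tail: "\<bar>(\<integral>z. G z \<partial>\<nu>) - (\<integral>z. g z \<partial>\<nu>)\<bar> < \<epsilon> / 3" if "moment_bounded_on S d C \<nu>" for \<nu>
    unfolding g_def using integral_cutoff_error_le[OF that \<open>0 \<le> C\<close> \<open>D < d\<close> A(1) R(1) G(1) A(2)] R(2)
    by linarith
  have "\<bar>(\<integral>x. G x \<partial>\<mu>s j) - (\<integral>x. G x \<partial>\<mu>)\<bar> < \<epsilon>" if "N \<le> j" for j
    using N[OF that] tail[OF \<mu>] tail[OF \<mu>s[of j]] unfolding abs_less_iff by linarith
  then show "\<exists>N. \<forall>j\<ge>N. norm ((\<integral>x. G x \<partial>\<mu>s j) - (\<integral>x. G x \<partial>\<mu>)) < \<epsilon>"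
    by auto
qed

section \<open>Helly selection on the orthant\<close>

lemma tight_distr_orthant_code:
  fixes \<mu>s :: "nat \<Rightarrow> (real^'n::finite) measure"
  assumes \<mu>s: "\<And>j. prob_space (\<mu>s j)" "\<And>j. sets (\<mu>s j) = sets borel"
  shows "tight (\<lambda>j. distr (\<mu>s j) borel orthant_code)"
proof -
  have code: "orthant_code \<in> measurable (\<mu>s j) borel" for j
    by (intro measurable_sets_borel[OF \<mu>s(2)] borel_measurable_orthant_code)
  have "real_distribution (distr (\<mu>s j) borel orthant_code)" for j
    using prob_space.prob_space_distr[OF \<mu>s(1) code]
    by (simp add: real_distribution_def real_distribution_axioms_def)
  moreover have "measure (distr (\<mu>s j) borel orthant_code) {-1<..2} = 1" for j
  proof -
    have "orthant_code z \<in> {-1<..2}" for z :: "real^'n"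
      using cantor_code_bounds[of "compress z"] unfolding orthant_code_def by simp
    then have "orthant_code -` {-1<..2} \<inter> space (\<mu>s j) = space (\<mu>s j)" by blast
    then show ?thesis
      by (simp add: measure_distr[OF code] prob_space.prob_space[OF \<mu>s(1)])
  qed
  ultimately show ?thesis
    unfolding tight_def by (intro conjI allI impI exI[of _ "-1"] exI[of _ 2]) auto
qed

lemma integral_distr_orthant_code:
  fixes g :: "real^'n::finite \<Rightarrow> real"
  assumes "sets \<mu> = sets borel" "AE z in \<mu>. z \<in> nonneg_orthant" "g \<in> borel_measurable borel"
  shows "(\<integral>x. g (orthant_decode x) \<partial>distr \<mu> borel orthant_code) = (\<integral>z. g z \<partial>\<mu>)"
proof -
  have [measurable]: "g \<in> borel_measurable borel" by fact
  have "(\<integral>x. g (orthant_decode x) \<partial>distr \<mu> borel orthant_code) = (\<integral>z. g (orthant_decode (orthant_code z)) \<partial>\<mu>)"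
    by (intro integral_distr measurable_sets_borel[OF assms(1)]) measurable
  also have "\<dots> = (\<integral>z. g z \<partial>\<mu>)"
    using assms(2) by (intro integral_cong_AE measurable_sets_borel[OF assms(1)])
      (measurable, auto elim!: eventually_mono simp: orthant_decode_code)
  finally show ?thesis .
qed

definition escape_weight :: "real \<Rightarrow> real^'n::finite \<Rightarrow> real" where
  "escape_weight L y = L * min 1 (\<Sum>i\<in>UNIV. max 0 ((1 + L) * y $ i - L))"

lemma continuous_escape_weight: "continuous_on UNIV (escape_weight L)"
  unfolding escape_weight_def by (intro continuous_intros)

lemma escape_weight_bounds:
  assumes "0 \<le> L"
  shows "0 \<le> escape_weight L y" "escape_weight L y \<le> L"
proof -
  have "0 \<le> (\<Sum>i\<in>UNIV. max 0 ((1 + L) * y $ i - L))" by (intro sum_nonneg) auto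
  then show "0 \<le> escape_weight L y" "escape_weight L y \<le> L"
    unfolding escape_weight_def using assms by (simp_all add: mult_left_le)
qed

lemma escape_weight_top:
  assumes "0 \<le> L" "1 \<le> y $ i"
  shows "escape_weight L y = L"
proof -
  have "1 + L \<le> (1 + L) * y $ i"
    using mult_left_mono[OF assms(2), of "1 + L"] assms(1) by simp
  then have "1 \<le> max 0 ((1 + L) * y $ i - L)" by (simp add: le_max_iff_disj)
  also have "\<dots> \<le> (\<Sum>i\<in>UNIV. max 0 ((1 + L) * y $ i - L))"
    by (rule member_le_sum) auto
  finally show ?thesis unfolding escape_weight_def by simp
qed

lemma escape_weight_compress_le:
  assumes "1 \<le> L" "1 \<le> d" "z \<in> nonneg_orthant"
  shows "escape_weight L (compress z) \<le> norm z ^ d"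
proof (cases "\<forall>i. z $ i \<le> L")
  case True
  have "(1 + L) * compress z $ i - L \<le> 0" for i
  proof -
    have "0 \<le> z $ i" using assms(3) by (simp add: nonneg_orthant_def)
    with True have "(1 + L) * z $ i \<le> L * (1 + z $ i)" by (simp add: algebra_simps)
    then show ?thesis using \<open>0 \<le> z $ i\<close> by (simp add: compress_def field_simps)
  qed
  then have "escape_weight L (compress z) = 0" by (simp add: escape_weight_def)
  then show ?thesis by simp
next
  case False
  then obtain i where "L < z $ i" by (auto simp: not_le)
  then have "L < norm z" using component_le_norm_cart[of z i] by linarith
  then have "L \<le> norm z ^ d"
    using assms power_increasing[of 1 d "norm z"] by auto
  then show ?thesis using escape_weight_bounds(2)[of L "compress z"] assms(1) by linarith
qed

lemma integral_escape_weight_le: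
  fixes \<mu> :: "(real^'n::finite) measure"
  assumes \<mu>: "moment_bounded_on nonneg_orthant d C \<mu>" "0 \<le> C" and "1 \<le> L" "1 \<le> d"
  shows "(\<integral>x. escape_weight L (cantor_decode x :: real^'n) \<partial>distr \<mu> borel orthant_code) \<le> C"
proof -
  have sets: "sets \<mu> = sets borel" and AE_S: "AE z in \<mu>. z \<in> nonneg_orthant"
    and "finite_measure \<mu>"
    using \<mu>(1) unfolding moment_bounded_on_def by blast+
  then interpret finite_measure \<mu> by blast
  have [measurable]: "(escape_weight L :: real^'n \<Rightarrow> real) \<in> borel_measurable borel"
    using continuous_escape_weight by (rule borel_measurable_continuous_onI)
  have [measurable]: "(cantor_decode :: real \<Rightarrow> real^'n) \<in> borel_measurable borel"
    using continuous_cantor_decode by (rule borel_measurable_continuous_onI)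
  have "(\<integral>x. escape_weight L (cantor_decode x :: real^'n) \<partial>distr \<mu> borel orthant_code)
      = (\<integral>z. escape_weight L (compress z) \<partial>\<mu>)"
    by (subst integral_distr) (auto intro: measurable_sets_borel[OF sets] simp: cantor_decode_orthant_code)
  also have "\<dots> \<le> (\<integral>z. norm z ^ d \<partial>\<mu>)"
  proof (rule integral_mono_AE)
    have "\<bar>escape_weight L (compress z)\<bar> \<le> L" for z :: "real^'n"
      using escape_weight_bounds[of L "compress z"] \<open>1 \<le> L\<close> by simp
    then show "integrable \<mu> (\<lambda>z. escape_weight L (compress z))"
      by (intro integrable_const_bound[where B = L] AE_I2 measurable_sets_borel[OF sets]) auto
    show "integrable \<mu> (\<lambda>z. norm z ^ d)" by (rule integrable_norm_power[OF \<mu>(1)])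
    show "AE z in \<mu>. escape_weight L (compress z) \<le> norm z ^ d"
      using AE_S by eventually_elim (rule escape_weight_compress_le[OF \<open>1 \<le> L\<close> \<open>1 \<le> d\<close>])
  qed
  also have "\<dots> \<le> C" by (rule integral_norm_power_le[OF \<mu>])
  finally show ?thesis .
qed

lemma AE_weak_limit_cantor_decode_less_one:
  fixes \<mu>s :: "nat \<Rightarrow> (real^'n::finite) measure"
  assumes \<mu>s: "\<And>j. moment_bounded_on nonneg_orthant d C (\<mu>s j)" and "0 \<le> C" "1 \<le> d"
    and \<nu>: "\<And>j. real_distribution (distr (\<mu>s j) borel orthant_code)" "real_distribution \<nu>"
      "weak_conv_m (\<lambda>j. distr (\<mu>s j) borel orthant_code) \<nu>"
  shows "AE x in \<nu>. \<forall>i. (cantor_decode x :: real^'n) $ i < 1"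
proof -
  interpret \<nu>: real_distribution \<nu> by (rule \<nu>(2))
  define T where "T = {x. \<exists>i. 1 \<le> (cantor_decode x :: real^'n) $ i}"
  have T_sets[measurable]: "T \<in> sets borel"
    unfolding T_def by (rule borel_closed[OF closed_cantor_decode_top])
  have bound: "measure \<nu> T * L \<le> C" if "1 \<le> L" for L
  proof -
    define F where "F x = escape_weight L (cantor_decode x :: real^'n)" for x
    have F_cont: "isCont F x" for x
      unfolding F_def using continuous_escape_weight continuous_cantor_decode
      by (metis continuous_on_compose2 continuous_on_eq_continuous_at open_UNIV UNIV_I subset_UNIV)
    have F_bounds: "0 \<le> F x" "F x \<le> L" for x
      unfolding F_def using that by (simp_all add: escape_weight_bounds)
    have "(\<lambda>j. \<integral>x. F x \<partial>distr (\<mu>s j) borel orthant_code) \<longlonglongrightarrow> (\<integral>x. F x \<partial>\<nu>)"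
      using F_bounds by (intro weak_conv_imp_integral_bdd_continuous_conv[OF \<nu>] F_cont) auto
    then have "(\<integral>x. F x \<partial>\<nu>) \<le> C"
      using integral_escape_weight_le[OF \<mu>s \<open>0 \<le> C\<close> that \<open>1 \<le> d\<close>]
      by (intro LIMSEQ_le_const2) (auto simp: F_def)
    moreover have "measure \<nu> T * L \<le> (\<integral>x. F x \<partial>\<nu>)"
    proof -
      have "measure \<nu> T * L = (\<integral>x. indicator T x * L \<partial>\<nu>)" by simp
      also have "\<dots> \<le> (\<integral>x. F x \<partial>\<nu>)"
      proof (rule integral_mono)
        show "integrable \<nu> (\<lambda>x. indicator T x * L)"
          by (intro integrable_mult_left integrable_real_indicator) (auto simp: \<nu>.emeasure_eq_measure)
        have "F \<in> borel_measurable borel"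
          using F_cont by (intro borel_measurable_continuous_onI continuous_at_imp_continuous_on) auto
        then show "integrable \<nu> F"
          using F_bounds
          by (intro \<nu>.integrable_const_bound[where B = L] AE_I2 measurable_sets_borel[OF \<nu>.events_eq_borel])
            auto
        show "indicator T x * L \<le> F x" for x
        proof (cases "x \<in> T")
          case True
          then obtain i where "1 \<le> (cantor_decode x :: real^'n) $ i" by (auto simp: T_def)
          then show ?thesis using True that by (simp add: F_def escape_weight_top)
        next
          case False
          then show ?thesis using F_bounds by simp
        qed
      qed
      finally show ?thesis .
    qed
    ultimately show ?thesis by linarith
  qed
  have "measure \<nu> T = 0"
  proof (rule ccontr)
    assume "measure \<nu> T \<noteq> 0"
    then have T_pos: "0 < measure \<nu> T" using measure_nonneg[of \<nu> T] by linarith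
    define L where "L = (C + 1) / measure \<nu> T + 1"
    have "1 \<le> L" using T_pos \<open>0 \<le> C\<close> by (simp add: L_def)
    moreover have "measure \<nu> T * L = C + 1 + measure \<nu> T"
      using T_pos by (simp add: L_def field_simps)
    ultimately show False using bound T_pos by fastforce
  qed
  then have "T \<in> null_sets \<nu>"
    by (simp add: null_sets_def \<nu>.emeasure_eq_measure \<nu>.events_eq_borel)
  then show ?thesis
    by (rule AE_I') (auto simp: T_def not_less)
qed

lemma weak_conv_on_distr_orthant_decode:
  fixes \<mu>s :: "nat \<Rightarrow> (real^'n::finite) measure"
  assumes \<mu>s: "\<And>j. sets (\<mu>s j) = sets borel" "\<And>j. AE z in \<mu>s j. z \<in> nonneg_orthant"
    and \<nu>: "\<And>j. real_distribution (distr (\<mu>s j) borel orthant_code)" "real_distribution \<nu>"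
      "weak_conv_m (\<lambda>j. distr (\<mu>s j) borel orthant_code) \<nu>"
    and finite: "AE x in \<nu>. \<forall>i. (cantor_decode x :: real^'n) $ i < 1"
  shows "weak_conv_on nonneg_orthant \<mu>s (distr \<nu> borel orthant_decode)"
  unfolding weak_conv_on_def
proof (intro allI impI)
  interpret \<nu>: real_distribution \<nu> by (rule \<nu>(2))
  fix g :: "real^'n \<Rightarrow> real" and B
  assume g[measurable]: "g \<in> borel_measurable borel" and "continuous_on nonneg_orthant g"
    and g_bound: "\<forall>z\<in>nonneg_orthant. \<bar>g z\<bar> \<le> B"
  have "AE x in \<nu>. isCont (\<lambda>x. g (orthant_decode x)) x"
    using finite
  proof eventually_elim
    case (elim x)
    have "continuous (at (orthant_decode x) within range orthant_decode) g"
      using \<open>continuous_on nonneg_orthant g\<close> orthant_decode_in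
      by (metis continuous_on_eq_continuous_within continuous_within_subset image_subsetI)
    moreover have "isCont (orthant_decode :: real \<Rightarrow> real^'n) x"
      using elim by (intro isCont_orthant_decode) auto
    ultimately show ?case
      using continuous_within_compose2[of x UNIV orthant_decode g] by simp
  qed
  then obtain N where N: "{x \<in> space \<nu>. \<not> isCont (\<lambda>x. g (orthant_decode x)) x} \<subseteq> N"
    "emeasure \<nu> N = 0" "N \<in> sets \<nu>"
    by (rule AE_E)
  have "emeasure \<nu> {x. \<not> isCont (\<lambda>x. g (orthant_decode x)) x} \<le> emeasure \<nu> N"
    using N(1,3) by (intro emeasure_mono) auto
  with N(2) have "emeasure \<nu> {x. \<not> isCont (\<lambda>x. g (orthant_decode x)) x} = 0"
    by simp
  then have "(\<lambda>j. \<integral>x. g (orthant_decode x) \<partial>distr (\<mu>s j) borel orthant_code)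
      \<longlonglongrightarrow> (\<integral>x. g (orthant_decode x) \<partial>\<nu>)"
    using g_bound orthant_decode_in
    by (intro weak_conv_imp_bdd_ae_continuous_conv[OF \<nu>, where B = B]) auto
  moreover have "(\<integral>x. g (orthant_decode x) \<partial>distr (\<mu>s j) borel orthant_code) = (\<integral>z. g z \<partial>\<mu>s j)" for j
    by (rule integral_distr_orthant_code[OF \<mu>s(1,2) g])
  moreover have "(\<integral>x. g (orthant_decode x) \<partial>\<nu>) = (\<integral>z. g z \<partial>distr \<nu> borel orthant_decode)"
    by (intro integral_distr[symmetric] measurable_sets_borel[OF \<nu>.events_eq_borel]) simp_all
  ultimately show "(\<lambda>j. \<integral>z. g z \<partial>\<mu>s j) \<longlonglongrightarrow> (\<integral>z. g z \<partial>distr \<nu> borel orthant_decode)"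
    by simp
qed

theorem orthant_helly_selection:
  fixes \<mu>s :: "nat \<Rightarrow> (real^'n::finite) measure"
  assumes \<mu>s: "\<And>j. prob_space (\<mu>s j)" "\<And>j. moment_bounded_on nonneg_orthant d C (\<mu>s j)"
    and "0 \<le> C" "1 \<le> d"
  obtains r \<mu> where "strict_mono r" "prob_space \<mu>" "moment_bounded_on nonneg_orthant d C \<mu>"
    "weak_conv_on nonneg_orthant (\<lambda>j. \<mu>s (r j)) \<mu>"
proof -
  have sets: "sets (\<mu>s j) = sets borel" for j
    using \<mu>s(2) unfolding moment_bounded_on_def by blast
  have tight: "tight (\<lambda>j. distr (\<mu>s j) borel orthant_code)"
    by (rule tight_distr_orthant_code[OF \<mu>s(1) sets])
  obtain r \<nu> where r: "strict_mono r" and \<nu>: "real_distribution \<nu>"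
    and conv: "weak_conv_m (\<lambda>j. distr (\<mu>s (r j)) borel orthant_code) \<nu>"
    using tight_imp_convergent_subsubsequence[OF tight strict_mono_id] by (auto simp: comp_def)
  interpret \<nu>: real_distribution \<nu> by (rule \<nu>)
  have rd: "real_distribution (distr (\<mu>s (r j)) borel orthant_code)" for j
    using tight unfolding tight_def by blast
  define \<mu> where "\<mu> = distr \<nu> borel (orthant_decode :: real \<Rightarrow> real^'n)"
  have decode: "orthant_decode \<in> measurable \<nu> (borel :: (real^'n) measure)"
    by (intro measurable_sets_borel[OF \<nu>.events_eq_borel] borel_measurable_orthant_decode)
  have finite: "AE x in \<nu>. \<forall>i. (cantor_decode x :: real^'n) $ i < 1"
    by (rule AE_weak_limit_cantor_decode_less_one[OF \<mu>s(2) \<open>0 \<le> C\<close> \<open>1 \<le> d\<close> rd \<nu> conv])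
  have "weak_conv_on nonneg_orthant (\<lambda>j. \<mu>s (r j)) \<mu>"
    unfolding \<mu>_def using \<mu>s(2) unfolding moment_bounded_on_def
    by (intro weak_conv_on_distr_orthant_decode[OF _ _ rd \<nu> conv finite]) auto
  moreover have "prob_space \<mu>" unfolding \<mu>_def by (rule \<nu>.prob_space_distr[OF decode])
  moreover have "moment_bounded_on nonneg_orthant d C \<mu>"
    unfolding moment_bounded_on_def
  proof (intro conjI)
    show "sets \<mu> = sets borel" "finite_measure \<mu>"
      using \<open>prob_space \<mu>\<close> by (simp_all add: \<mu>_def prob_space_def)
    show "AE x in \<mu>. x \<in> nonneg_orthant"
      unfolding \<mu>_def using nonneg_orthant_sets
      by (simp add: AE_distr_iff[OF decode] orthant_decode_in)
    show "(\<integral>\<^sup>+x. ennreal (norm x ^ d) \<partial>\<mu>) \<le> ennreal C"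
      using \<mu>s(2) unfolding moment_bounded_on_def
      by (intro weak_conv_on_nn_integral_norm_power_le[OF \<open>weak_conv_on _ _ \<mu>\<close> \<open>sets \<mu> = _\<close>
          \<open>finite_measure \<mu>\<close> _ _ \<open>0 \<le> C\<close>]) auto
  qed
  ultimately show ?thesis using r that by blast
qed

section \<open>The feasible set\<close>

lemma poly_growth_hinge:
  assumes "1 \<le> D"
  shows "poly_growth_on S D (\<lambda>z::real^'n::finite. max 0 (z $ i - c))"
proof -
  have "\<bar>max 0 (z $ i - c)\<bar> \<le> (\<bar>c\<bar> + 1) * (1 + norm z ^ D)" for z :: "real^'n"
  proof -
    have "\<bar>max 0 (z $ i - c)\<bar> \<le> norm z + \<bar>c\<bar>"
      using component_le_norm_cart[of z i] by auto
    moreover have "norm z \<le> 1 + norm z ^ D"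
      using power_le_one_plus_power[of 1 D "norm z"] assms by simp
    moreover have "0 \<le> \<bar>c\<bar> * norm z ^ D" by simp
    moreover have "(\<bar>c\<bar> + 1) * (1 + norm z ^ D) = \<bar>c\<bar> + \<bar>c\<bar> * norm z ^ D + 1 + norm z ^ D"
      by (simp add: algebra_simps)
    ultimately show ?thesis by linarith
  qed
  then show ?thesis unfolding poly_growth_on_def by (intro exI[of _ "\<bar>c\<bar> + 1"]) auto
qed

lemma feasible_measuresD:
  assumes "\<mu> \<in> feasible_measures N k q m f p M d"
  shows "prob_space \<mu>" "moment_bounded_on nonneg_orthant d M \<mu>"
    "\<And>i j. j \<in> {1..N i} \<Longrightarrow> (\<integral>x. max 0 (x $ i - k i j) \<partial>\<mu>) = q i j"
    "\<And>l. l \<in> {1..m} \<Longrightarrow> (\<integral>x. peval (f l) x \<partial>\<mu>) = p l"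
proof -
  have sets: "sets \<mu> = sets borel" and "finite_measure \<mu>" "measure \<mu> UNIV = 1"
    and null: "emeasure \<mu> (UNIV - nonneg_orthant) = 0"
    using assms unfolding feasible_measures_def by blast+
  then show "prob_space \<mu>"
    by (simp add: prob_space_def prob_space_axioms_def finite_measure.emeasure_eq_measure
        sets_eq_imp_space_eq[OF sets])
  have "AE x in \<mu>. x \<in> nonneg_orthant"
    using null sets by (intro AE_I'[of "UNIV - nonneg_orthant"]) (auto simp: null_sets_def)
  then show "moment_bounded_on nonneg_orthant d M \<mu>"
    using assms \<open>finite_measure \<mu>\<close> sets unfolding moment_bounded_on_def feasible_measures_def by blast
qed (use assms in \<open>auto simp: feasible_measures_def\<close>)

lemma feasible_measures_weak_limit:
  assumes \<mu>s: "\<And>j. \<mu>s j \<in> feasible_measures N k q m f p M d"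
    and conv: "weak_conv_on nonneg_orthant \<mu>s \<mu>"
    and \<mu>: "prob_space \<mu>" "moment_bounded_on nonneg_orthant d M \<mu>"
    and "0 \<le> M" "D < d"
    and hinge: "\<And>i j. j \<in> {1..N i} \<Longrightarrow> 1 \<le> D"
    and f: "\<And>l. l \<in> {1..m} \<Longrightarrow> poly_coeffs (f l) \<and> pdeg (f l) \<le> D"
  shows "\<mu> \<in> feasible_measures N k q m f p M d"
proof -
  have limit: "integrable \<mu> G \<and> (\<integral>x. G x \<partial>\<mu>) = c"
    if "G \<in> borel_measurable borel" "continuous_on nonneg_orthant G" "poly_growth_on nonneg_orthant D G"
      "\<And>j. (\<integral>x. G x \<partial>\<mu>s j) = c" for G c
  proof
    show "integrable \<mu> G"
      using \<open>D < d\<close> by (intro integrable_poly_growth[OF \<mu>(2) that(3,1)]) simp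
    have "(\<lambda>j. \<integral>x. G x \<partial>\<mu>s j) \<longlonglongrightarrow> (\<integral>x. G x \<partial>\<mu>)"
      using feasible_measuresD(2)[OF \<mu>s] \<mu>(2) \<open>0 \<le> M\<close> \<open>D < d\<close> that(1-3)
      by (rule weak_conv_on_tendsto_integral_poly_growth[OF conv])
    then show "(\<integral>x. G x \<partial>\<mu>) = c"
      unfolding that(4) using LIMSEQ_unique tendsto_const by blast
  qed
  have sets: "sets \<mu> = sets borel" and AE_S: "AE x in \<mu>. x \<in> nonneg_orthant"
    and mom: "(\<integral>\<^sup>+x. ennreal (norm x ^ d) \<partial>\<mu>) \<le> ennreal M"
    using \<mu>(2) unfolding moment_bounded_on_def by blast+
  have "UNIV - nonneg_orthant = {x \<in> space \<mu>. x \<notin> nonneg_orthant}"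
    by (auto simp: sets_eq_imp_space_eq[OF sets])
  moreover have "UNIV - nonneg_orthant \<in> sets \<mu>" unfolding sets by measurable
  ultimately have "emeasure \<mu> (UNIV - nonneg_orthant) = 0"
    using AE_S by (simp add: AE_iff_measurable)
  moreover have "measure \<mu> UNIV = 1"
    using prob_space.prob_space[OF \<mu>(1)] by (simp add: sets_eq_imp_space_eq[OF sets])
  moreover have "integrable \<mu> (\<lambda>x. max 0 (x $ i - k i j)) \<and> (\<integral>x. max 0 (x $ i - k i j) \<partial>\<mu>) = q i j"
    if "j \<in> {1..N i}" for i j
    using feasible_measuresD(3)[OF \<mu>s that] poly_growth_hinge[OF hinge[OF that]]
    by (intro limit) (auto intro!: continuous_intros)
  moreover have "integrable \<mu> (peval (f l)) \<and> (\<integral>x. peval (f l) x \<partial>\<mu>) = p l" if "l \<in> {1..m}" for l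
    using feasible_measuresD(4)[OF \<mu>s that] f[OF that]
    by (intro limit continuous_on_subset[OF continuous_peval])
       (auto intro: poly_growth_on_mono poly_growth_peval)
  ultimately show ?thesis
    using sets mom \<mu>(1) unfolding feasible_measures_def by (auto simp: prob_space_def)
qed

lemma sequentially_compact_values_attain:
  fixes v :: "'a \<Rightarrow> real"
  assumes "F \<noteq> {}"
    and limit: "\<And>xs :: nat \<Rightarrow> 'a. (\<And>j. xs j \<in> F) \<Longrightarrow> \<exists>r x. strict_mono r \<and> x \<in> F \<and> (\<lambda>j. v (xs (r j))) \<longlonglongrightarrow> v x"
  shows "(\<exists>x\<in>F. \<forall>y\<in>F. v y \<le> v x) \<and> (\<exists>x\<in>F. \<forall>y\<in>F. v x \<le> v y)"
proof -
  have "seq_compact (v ` F)"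
  proof (rule seq_compactI)
    fix ts :: "nat \<Rightarrow> real" assume "\<forall>j. ts j \<in> v ` F"
    then have "\<forall>j. \<exists>x. x \<in> F \<and> ts j = v x" by blast
    then have "\<exists>xs. \<forall>j. xs j \<in> F \<and> ts j = v (xs j)" by (rule choice)
    then obtain xs :: "nat \<Rightarrow> 'a" where xs: "\<forall>j. xs j \<in> F \<and> ts j = v (xs j)" ..
    then have "\<And>j. xs j \<in> F" by simp
    then obtain r x where r: "strict_mono r" and "x \<in> F" "(\<lambda>j. v (xs (r j))) \<longlonglongrightarrow> v x"
      using limit by blast
    moreover have "ts \<circ> r = (\<lambda>j. v (xs (r j)))" using xs by auto
    ultimately have "v x \<in> v ` F" "(ts \<circ> r) \<longlonglongrightarrow> v x" by simp_all
    then show "\<exists>l\<in>v ` F. \<exists>r. strict_mono r \<and> (ts \<circ> r) \<longlonglongrightarrow> l"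
      using r by blast
  qed
  then have "compact (v ` F)" by (simp add: seq_compact_eq_compact)
  moreover have "v ` F \<noteq> {}" using assms(1) by simp
  ultimately show ?thesis
    using compact_attains_sup[of "v ` F"] compact_attains_inf[of "v ` F"] by simp
qed

lemma feasible_measures_attain:
  fixes N :: "'n::finite \<Rightarrow> nat" and k q :: "'n \<Rightarrow> nat \<Rightarrow> real"
    and m :: nat and f :: "nat \<Rightarrow> (('n \<Rightarrow> nat) \<Rightarrow> real)" and p :: "nat \<Rightarrow> real"
    and M :: real and phi :: "real^'n \<Rightarrow> real" and D d :: nat
  defines "F \<equiv> feasible_measures N k q m f p M d"
  assumes "F \<noteq> {}" "0 \<le> M" "D < d"
    and hinge: "\<And>i j. j \<in> {1..N i} \<Longrightarrow> 1 \<le> D"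
    and f: "\<And>l. l \<in> {1..m} \<Longrightarrow> poly_coeffs (f l) \<and> pdeg (f l) \<le> D"
    and phi: "continuous_on nonneg_orthant phi" "poly_growth_on nonneg_orthant D phi"
  shows "(\<exists>\<mu>\<in>F. \<forall>\<nu>\<in>F. (\<integral>x. phi x \<partial>\<nu>) \<le> (\<integral>x. phi x \<partial>\<mu>))
       \<and> (\<exists>\<mu>\<in>F. \<forall>\<nu>\<in>F. (\<integral>x. phi x \<partial>\<mu>) \<le> (\<integral>x. phi x \<partial>\<nu>))"
proof (cases "phi \<in> borel_measurable borel")
  case False
  text \<open>\<open>phi\<close> is arbitrary outside the orthant; if it is not measurable, every
    integral of it is \<open>0\<close> by convention.\<close>
  have zero: "(\<integral>x. phi x \<partial>\<nu>) = 0" if "\<nu> \<in> F" for \<nu>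
  proof (rule not_integrable_integral_eq)
    have "sets \<nu> = sets borel"
      using feasible_measuresD(2)[OF that[unfolded F_def]] by (simp add: moment_bounded_on_def)
    then have "borel_measurable \<nu> = borel_measurable borel" by (rule measurable_cong_sets) simp
    then show "\<not> integrable \<nu> phi" using False borel_measurable_integrable by metis
  qed
  obtain \<mu> where "\<mu> \<in> F" using \<open>F \<noteq> {}\<close> by blast
  moreover have "\<forall>\<nu>\<in>F. (\<integral>x. phi x \<partial>\<nu>) \<le> (\<integral>x. phi x \<partial>\<mu>)" "\<forall>\<nu>\<in>F. (\<integral>x. phi x \<partial>\<mu>) \<le> (\<integral>x. phi x \<partial>\<nu>)"
    using zero \<open>\<mu> \<in> F\<close> by simp_all
  ultimately show ?thesis by blast
next
  case True
  show ?thesis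
  proof (rule sequentially_compact_values_attain[OF \<open>F \<noteq> {}\<close>])
    fix \<mu>s :: "nat \<Rightarrow> (real^'n) measure" assume "\<And>j. \<mu>s j \<in> F"
    then have \<mu>s: "\<And>j. \<mu>s j \<in> feasible_measures N k q m f p M d" unfolding F_def .
    have "1 \<le> d" using \<open>D < d\<close> by simp
    have prob: "\<And>j. prob_space (\<mu>s j)" and mom: "\<And>j. moment_bounded_on nonneg_orthant d M (\<mu>s j)"
      using feasible_measuresD(1,2)[OF \<mu>s] by blast+
    obtain r \<mu> where r: "strict_mono r" and \<mu>: "prob_space \<mu>" "moment_bounded_on nonneg_orthant d M \<mu>"
      and conv: "weak_conv_on nonneg_orthant (\<lambda>j. \<mu>s (r j)) \<mu>"
      by (rule orthant_helly_selection[OF prob mom \<open>0 \<le> M\<close> \<open>1 \<le> d\<close>])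
    have "\<mu> \<in> F"
      unfolding F_def using \<open>0 \<le> M\<close> \<open>D < d\<close> hinge f
      by (rule feasible_measures_weak_limit[OF \<mu>s conv \<mu>])
    moreover have "(\<lambda>j. \<integral>x. phi x \<partial>\<mu>s (r j)) \<longlonglongrightarrow> (\<integral>x. phi x \<partial>\<mu>)"
      by (rule weak_conv_on_tendsto_integral_poly_growth[OF conv mom \<mu>(2) \<open>0 \<le> M\<close> \<open>D < d\<close> True phi])
    ultimately show "\<exists>r \<mu>. strict_mono r \<and> \<mu> \<in> F \<and> (\<lambda>j. \<integral>x. phi x \<partial>\<mu>s (r j)) \<longlonglongrightarrow> (\<integral>x. phi x \<partial>\<mu>)"
      using r by blast
  qed
qed

theorem lemma1:
  fixes N :: "'n::finite \<Rightarrow> nat" and k q :: "'n \<Rightarrow> nat \<Rightarrow> real"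
    and m :: nat and f :: "nat \<Rightarrow> (('n \<Rightarrow> nat) \<Rightarrow> real)" and p :: "nat \<Rightarrow> real"
    and M :: real and phi :: "real^'n \<Rightarrow> real"
    and P :: "nat \<Rightarrow> (('n \<Rightarrow> nat) \<Rightarrow> real)" and r :: nat and D d :: nat
  assumes M: "0 \<le> M"
    and f_poly: "\<forall>l\<in>{1..m}. poly_coeffs (f l)"
    and phi_pw: "cont_piecewise_poly_on nonneg_orthant phi P r"
    and phi_nonneg: "\<forall>x\<in>nonneg_orthant. 0 \<le> phi x"
    and D_def: "D = Max ({pw_deg P r} \<union> {1 | i j. i \<in> (UNIV::'n set) \<and> j \<in> {1..N i}}
                         \<union> {pdeg (f l) | l. l \<in> {1..m}})"
    and d_def: "d = (LEAST e::nat. even e \<and> D + 1 \<le> e)"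
    and feas: "feasible_measures N k q m f p M d \<noteq> {}"
  shows "(\<exists>\<mu>\<in>feasible_measures N k q m f p M d.
            \<forall>\<nu>\<in>feasible_measures N k q m f p M d. (\<integral>x. phi x \<partial>\<nu>) \<le> (\<integral>x. phi x \<partial>\<mu>))
       \<and> (\<exists>\<mu>\<in>feasible_measures N k q m f p M d.
            \<forall>\<nu>\<in>feasible_measures N k q m f p M d. (\<integral>x. phi x \<partial>\<mu>) \<le> (\<integral>x. phi x \<partial>\<nu>))"
proof (rule feasible_measures_attain[OF feas M])
  have "even (2 * (D + 1)) \<and> D + 1 \<le> 2 * (D + 1)" by simp
  then have "even d \<and> D + 1 \<le> d" unfolding d_def by (rule LeastI)
  then show "D < d" by simp
  have "finite {1 | i j. i \<in> (UNIV::'n set) \<and> j \<in> {1..N i}}"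
    by (rule finite_subset[of _ "{1}"]) auto
  then have degrees: "finite ({pw_deg P r} \<union> {1 | i j. i \<in> (UNIV::'n set) \<and> j \<in> {1..N i}}
      \<union> {pdeg (f l) | l. l \<in> {1..m}})"
    by (simp add: setcompr_eq_image)
  show "1 \<le> D" if "j \<in> {1..N i}" for i j
    unfolding D_def using that by (intro Max_ge[OF degrees]) auto
  show "poly_coeffs (f l) \<and> pdeg (f l) \<le> D" if "l \<in> {1..m}" for l
  proof
    show "poly_coeffs (f l)" using that f_poly by blast
    show "pdeg (f l) \<le> D" unfolding D_def using that by (intro Max_ge[OF degrees]) blast
  qed
  have "pw_deg P r \<le> D" unfolding D_def by (intro Max_ge[OF degrees]) simp
  then show "poly_growth_on nonneg_orthant D phi"
    by (rule poly_growth_on_mono[OF poly_growth_piecewise_poly[OF phi_pw]])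
  show "continuous_on nonneg_orthant phi"
    using phi_pw by (simp add: cont_piecewise_poly_on_def)
qed

end
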